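(* Let $V$ be a real vector space, $R:V\to\mathbb{R}\cup\{+\infty\}$ and $f:\mathbb{R}^m\to\mathbb{R}\cup\{+\infty\}$ convex, $\Phi:V\to\mathbb{R}^m$ linear, and let $p$ be a minimizer of $R+f\circ\Phi$ with finite minimal value $M=R(p)+f(\Phi p)$. Let $\mathrm{epi}(R)=\{(u,r)\in V\times\mathbb{R}: R(u)\le r\}$ and $\mathrm{hypo}(M-f\circ\Phi)=\{(u,r)\in V\times\mathbb{R}: M-f(\Phi u)\ge r\}$; the point $(p,R(p))$ lies in both. Let $\vec E$ and $\vec H$ be the linear subspaces of $V\times\mathbb{R}$ parallel to the affine hulls of $F((p,R(p)),\mathrm{epi}(R))$ and $F((p,R(p)),\mathrm{hypo}(M-f\circ\Phi))$ respectively. Then $\mathrm{codim}_{V\times\mathbb{R}}(\vec E+\vec H)\ge 1$. If moreover both faces $F((p,R(p)),\mathrm{epi}(R))$ and $F((p,R(p)),\mathrm{hypo}(M-f\circ\Phi))$ are horizontal and ($R(p)>\inf_V R$ or $f(\Phi p)>\inf_V f\circ\Phi$), then $\mathrm{codim}_{V\times\mathbb{R}}(\vec E+\vec H)\ge 2$.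
   Context: For a convex set $C$, a face is a convex subset $F\subseteq C$ such that every open segment $]x,y[=\{tx+(1-t)y:0<t<1\}$ ($x\neq y$) contained in $C$ which intersects $F$ is contained in $F$; $F(x,C)$ denotes the intersection of all faces of $C$ containing $x$. For a convex set $C\subseteq V\times\mathbb{R}$ and $(x,r)\in C$, the face $F((x,r),C)$ is horizontal if its affine hull is contained in $V\times\{r\}$, and oblique otherwise. *)

theory Defs
  imports "HOL-Analysis.Analysis"
begin

definition is_face :: "'a::real_vector set \<Rightarrow> 'a set \<Rightarrow> bool" where
  "is_face C F \<longleftrightarrow> F \<subseteq> C \<and> convex F \<and>
     (\<forall>x y. x \<noteq> y \<longrightarrow> open_segment x y \<subseteq> C \<longrightarrow> open_segment x y \<inter> F \<noteq> {}
            \<longrightarrow> open_segment x y \<subseteq> F)"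

definition minface :: "'a::real_vector \<Rightarrow> 'a set \<Rightarrow> 'a set" where
  "minface x C = \<Inter>{F. is_face C F \<and> x \<in> F}"

definition direction :: "'a::real_vector set \<Rightarrow> 'a set" where
  "direction S = {a - b | a b. a \<in> affine hull S \<and> b \<in> affine hull S}"

definition horizontal :: "('v::real_vector \<times> real) set \<Rightarrow> real \<Rightarrow> bool" where
  "horizontal F r \<longleftrightarrow> affine hull F \<subseteq> {z. snd z = r}"

text \<open>Codimension at least k of a linear subspace S of the ambient space:
  the quotient space has dimension \<ge> k, i.e. there are k linearly independent vectors
  whose span meets S only in 0.\<close>
definition codim_ge :: "nat \<Rightarrow> 'a::real_vector set \<Rightarrow> bool" where
  "codim_ge k S \<longleftrightarrow> (\<exists>B. finite B \<and> card B = k \<and> independent B \<and> span B \<inter> S = {0})"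

definition set_sum :: "'a::real_vector set \<Rightarrow> 'a set \<Rightarrow> 'a set" where
  "set_sum A B = {a + b | a b. a \<in> A \<and> b \<in> B}"

definition epi :: "('v \<Rightarrow> ereal) \<Rightarrow> ('v \<times> real) set" where
  "epi R = {(u, r). R u \<le> ereal r}"

definition hypo :: "('v \<Rightarrow> ereal) \<Rightarrow> ('v \<times> real) set" where
  "hypo g = {(u, r). g u \<ge> ereal r}"

definition ext_convex :: "('a::real_vector \<Rightarrow> ereal) \<Rightarrow> bool" where
  "ext_convex g \<longleftrightarrow> convex {(u, r::real). g u \<le> ereal r}"

end

theory Submission
  imports Defs
begin

text \<open>Write X = (p, R p). Since a point x lies in the relative interior of F(x,C), every direction d
  of the minimal face is two-sided: X + s d stays in the face for all small |s|. Minimality of M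
  says that epi R lies above the hypograph of M - f \<circ> \<Phi>. If (0,1) = e + h with e, h
  directions of the two faces, then X - \<sigma> e \<in> epi R and X + \<sigma> h lies in the hypograph,
  over the same base point but \<sigma> higher, which is impossible. If both faces are horizontal and
  p does not minimise both R and f \<circ> \<Phi>, some point of epi R lies strictly below level R p
  (or of the hypograph strictly above it); a convex combination of it with the level line of
  one face yields the same kind of crossing, so no (u - p, 0) with u such a point lies in
  the sum either, and together with (0,1) this gives codimension 2.\<close>

lemma convex_shrink_ray:
  assumes "convex F" "x \<in> F" "x + e *\<^sub>R d \<in> F" "0 \<le> s" "s \<le> e"
  shows "x + s *\<^sub>R d \<in> F"
proof (cases "e = 0")
  case True
  then show ?thesis using assms by simp
next
  case False
  then have "e > 0" using assms by simp
  then have "(1 - s/e) *\<^sub>R x + (s/e) *\<^sub>R (x + e *\<^sub>R d) \<in> F"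
    using assms by (intro convexD) (auto simp: field_simps)
  moreover have "(1 - s/e) *\<^sub>R x + (s/e) *\<^sub>R (x + e *\<^sub>R d) = x + s *\<^sub>R d"
    using \<open>e > 0\<close> by (simp add: algebra_simps)
  ultimately show ?thesis by simp
qed

text \<open>This set is a face of C containing x, so it contains the minimal face F(x,C).\<close>
definition extensible_through :: "'a::real_vector set \<Rightarrow> 'a \<Rightarrow> 'a set" where
  "extensible_through C x = {y \<in> C. \<exists>e>0. x + e *\<^sub>R (x - y) \<in> C}"

lemma convex_extensible_through:
  assumes C: "convex C" and x: "x \<in> C"
  shows "convex (extensible_through C x)"
  unfolding convex_def
proof (intro ballI allI impI)
  fix y1 y2 and u v :: real
  assume "y1 \<in> extensible_through C x" "y2 \<in> extensible_through C x"
    and uv: "0 \<le> u" "0 \<le> v" "u + v = 1"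
  then obtain e1 e2 where y: "y1 \<in> C" "y2 \<in> C"
    and e1: "e1 > 0" "x + e1 *\<^sub>R (x - y1) \<in> C" and e2: "e2 > 0" "x + e2 *\<^sub>R (x - y2) \<in> C"
    by (auto simp: extensible_through_def)
  define e where "e = min e1 e2"
  have "e > 0" using e1 e2 by (simp add: e_def)
  have "x + e *\<^sub>R (x - y1) \<in> C" "x + e *\<^sub>R (x - y2) \<in> C"
    using convex_shrink_ray[OF C x e1(2)] convex_shrink_ray[OF C x e2(2)] \<open>e > 0\<close>
    by (auto simp: e_def)
  then have "u *\<^sub>R (x + e *\<^sub>R (x - y1)) + v *\<^sub>R (x + e *\<^sub>R (x - y2)) \<in> C"
    using uv by (intro convexD[OF C]) auto
  moreover have "u *\<^sub>R (x + e *\<^sub>R (x - y1)) + v *\<^sub>R (x + e *\<^sub>R (x - y2))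
      = (u + v) *\<^sub>R x + e *\<^sub>R ((u + v) *\<^sub>R x - (u *\<^sub>R y1 + v *\<^sub>R y2))"
    by (simp add: algebra_simps)
  ultimately have "x + e *\<^sub>R (x - (u *\<^sub>R y1 + v *\<^sub>R y2)) \<in> C"
    using uv(3) by simp
  moreover have "u *\<^sub>R y1 + v *\<^sub>R y2 \<in> C" using uv y by (intro convexD[OF C]) auto
  ultimately show "u *\<^sub>R y1 + v *\<^sub>R y2 \<in> extensible_through C x"
    using \<open>e > 0\<close> by (auto simp: extensible_through_def)
qed

lemma open_segment_split:
  assumes z: "z \<in> open_segment a b" and w: "w \<in> open_segment a b"
  obtains m q where "0 < m" "m < 1" "q \<in> open_segment a b" "z = m *\<^sub>R w + (1 - m) *\<^sub>R q"
proof -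
  obtain s where s: "0 < s" "s < 1" "z = (1 - s) *\<^sub>R a + s *\<^sub>R b" "a \<noteq> b"
    using z by (auto simp: in_segment)
  obtain t where t: "0 < t" "t < 1" "w = (1 - t) *\<^sub>R a + t *\<^sub>R b"
    using w by (auto simp: in_segment)
  define m where "m = min s (1 - s) / 2"
  have m: "0 < m" "m < s" "m < 1 - s" using s by (auto simp: m_def)
  define r where "r = (s - m * t) / (1 - m)"
  have hr: "(1 - m) * r = s - m * t" using m by (simp add: r_def)
  have "m * t < m" "m * (1 - t) < m" using m t by (simp_all add: mult_strict_left_mono)
  then have "m * t < s" "m * (1 - t) < 1 - s" using m by linarith+
  then have "0 < r" "r < 1" using m by (simp_all add: r_def field_simps)
  then have "(1 - r) *\<^sub>R a + r *\<^sub>R b \<in> open_segment a b"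
    unfolding in_segment using s(4) by blast
  moreover have "z = m *\<^sub>R w + (1 - m) *\<^sub>R ((1 - r) *\<^sub>R a + r *\<^sub>R b)"
  proof -
    have "m *\<^sub>R w + (1 - m) *\<^sub>R ((1 - r) *\<^sub>R a + r *\<^sub>R b)
        = (1 - (m * t + (1 - m) * r)) *\<^sub>R a + (m * t + (1 - m) * r) *\<^sub>R b"
      unfolding t(3) by (simp add: algebra_simps)
    then show ?thesis unfolding hr s(3) by simp
  qed
  ultimately show ?thesis using that m by auto
qed

lemma extensible_through_convex_combination:
  assumes C: "convex C" and x: "x \<in> C" and q: "q \<in> C"
    and e: "e > 0" "x + e *\<^sub>R (x - z) \<in> C"
    and m: "0 < m" "m < 1" and z: "z = m *\<^sub>R w + (1 - m) *\<^sub>R q"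
  shows "\<exists>d>0. x + d *\<^sub>R (x - w) \<in> C"
proof -
  define g where "g = 1 / (2 * (1 + e))"
  define c where "c = g * e"
  have "g > 0" "c > 0" "c + g = 1/2" using e by (auto simp: c_def g_def field_simps)
  have "c * (1 - m) \<le> c" using \<open>c > 0\<close> m by (simp add: mult_left_le)
  then have "0 \<le> 1 - c * (1 - m) - g" using \<open>c + g = 1/2\<close> by linarith
  then have "(1 - c * (1 - m) - g) *\<^sub>R x + g *\<^sub>R (x + e *\<^sub>R (x - z)) + (c * (1 - m)) *\<^sub>R q
      \<in> convex hull {x, x + e *\<^sub>R (x - z), q}"
    unfolding convex_hull_3 using \<open>g > 0\<close> \<open>c > 0\<close> m
    by (intro CollectI exI conjI) auto
  moreover have "convex hull {x, x + e *\<^sub>R (x - z), q} \<subseteq> C"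
    using x e q C by (intro hull_minimal) auto
  moreover have "(1 - c * (1 - m) - g) *\<^sub>R x + g *\<^sub>R (x + e *\<^sub>R (x - z)) + (c * (1 - m)) *\<^sub>R q
      = x + (c * m) *\<^sub>R (x - w)"
    unfolding z c_def by (simp add: algebra_simps)
  ultimately show ?thesis using \<open>c > 0\<close> m by (intro exI[of _ "c * m"]) auto
qed

lemma is_face_extensible_through:
  assumes C: "convex C" and x: "x \<in> C"
  shows "is_face C (extensible_through C x)"
  unfolding is_face_def
proof (intro conjI allI impI)
  show "extensible_through C x \<subseteq> C" "convex (extensible_through C x)"
    using convex_extensible_through[OF C x] by (auto simp: extensible_through_def)
  fix a b
  assume ab: "open_segment a b \<subseteq> C" and "open_segment a b \<inter> extensible_through C x \<noteq> {}"
  then obtain z e where z: "z \<in> open_segment a b" "e > 0" "x + e *\<^sub>R (x - z) \<in> C"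
    by (auto simp: extensible_through_def)
  show "open_segment a b \<subseteq> extensible_through C x"
  proof
    fix w assume w: "w \<in> open_segment a b"
    obtain m q where "0 < m" "m < 1" "q \<in> open_segment a b" "z = m *\<^sub>R w + (1 - m) *\<^sub>R q"
      using open_segment_split[OF z(1) w] .
    then have "\<exists>d>0. x + d *\<^sub>R (x - w) \<in> C"
      using ab z by (intro extensible_through_convex_combination[OF C x]) auto
    then show "w \<in> extensible_through C x"
      using ab w by (auto simp: extensible_through_def)
  qed
qed

lemma mem_minface: "x \<in> minface x C"
  unfolding minface_def by auto

lemma convex_minface: "convex (minface x C)"
  unfolding minface_def by (rule convex_Inter) (auto simp: is_face_def)

lemma minface_subset:
  assumes "convex C" "x \<in> C"
  shows "minface x C \<subseteq> C"
  using assms unfolding minface_def is_face_def by blast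

text \<open>That is, x lies in the relative interior of F(x,C).\<close>
lemma minface_extensible_through:
  fixes C :: "'a::real_vector set"
  assumes C: "convex C" and x: "x \<in> C" and y: "y \<in> minface x C"
  shows "\<exists>e>0. x + e *\<^sub>R (x - y) \<in> minface x C"
proof (cases "y = x")
  case True
  then show ?thesis using mem_minface[of x C] by (auto intro: exI[of _ 1])
next
  case False
  have "x \<in> extensible_through C x" using x by (auto simp: extensible_through_def intro: exI[of _ 1])
  then have "minface x C \<subseteq> extensible_through C x"
    using is_face_extensible_through[OF C x] unfolding minface_def by blast
  with y obtain e where yC: "y \<in> C" and e: "e > 0" "x + e *\<^sub>R (x - y) \<in> C"
    by (auto simp: extensible_through_def)
  define z where "z = x + e *\<^sub>R (x - y)"
  have yz: "y \<noteq> z"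
  proof
    assume "y = z"
    then have "(1 + e) *\<^sub>R (x - y) = 0" by (simp add: z_def algebra_simps)
    then show False using e False by simp
  qed
  have segC: "open_segment y z \<subseteq> C"
    using closed_segment_subset[OF yC e(2)[folded z_def] C] open_closed_segment by blast
  have on_line: "(1 - u) *\<^sub>R y + u *\<^sub>R z = x + (u * (1 + e) - 1) *\<^sub>R (x - y)" for u
    by (simp add: z_def algebra_simps)
  have "x + t *\<^sub>R (x - y) \<in> open_segment y z" if "0 \<le> t" "t < e" for t
  proof -
    have "x + t *\<^sub>R (x - y) = (1 - (1 + t) / (1 + e)) *\<^sub>R y + ((1 + t) / (1 + e)) *\<^sub>R z"
      unfolding on_line using e by simp
    moreover have "0 < (1 + t) / (1 + e)" "(1 + t) / (1 + e) < 1" using that by auto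
    ultimately show ?thesis unfolding in_segment using yz by blast
  qed
  from this[of 0] this[of "e/2"]
  have "x \<in> open_segment y z" "x + (e/2) *\<^sub>R (x - y) \<in> open_segment y z"
    using e by auto
  then have "x + (e/2) *\<^sub>R (x - y) \<in> F" if "is_face C F" "x \<in> F" for F
    using that segC yz unfolding is_face_def by blast
  then have "x + (e/2) *\<^sub>R (x - y) \<in> minface x C" unfolding minface_def by blast
  then show ?thesis using e by (intro exI[of _ "e/2"]) auto
qed

definition two_sided_dir :: "'a::real_vector set \<Rightarrow> 'a \<Rightarrow> 'a \<Rightarrow> bool" where
  "two_sided_dir F x d \<longleftrightarrow> (\<exists>e>0. \<forall>s. \<bar>s\<bar> \<le> e \<longrightarrow> x + s *\<^sub>R d \<in> F)"

lemma subspace_two_sided_dir: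
  assumes F: "convex F" and x: "x \<in> F"
  shows "subspace {d. two_sided_dir F x d}"
  unfolding subspace_def
proof (intro conjI ballI allI)
  show "0 \<in> {d. two_sided_dir F x d}" using x by (auto simp: two_sided_dir_def intro: exI[of _ 1])
next
  fix d1 d2 assume "d1 \<in> {d. two_sided_dir F x d}" "d2 \<in> {d. two_sided_dir F x d}"
  then obtain e1 e2 where e1: "e1 > 0" "\<forall>s. \<bar>s\<bar> \<le> e1 \<longrightarrow> x + s *\<^sub>R d1 \<in> F"
    and e2: "e2 > 0" "\<forall>s. \<bar>s\<bar> \<le> e2 \<longrightarrow> x + s *\<^sub>R d2 \<in> F" by (auto simp: two_sided_dir_def)
  have "x + s *\<^sub>R (d1 + d2) \<in> F" if s: "\<bar>s\<bar> \<le> min e1 e2 / 2" for s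
  proof -
    have "(1/2) *\<^sub>R (x + (2 * s) *\<^sub>R d1) + (1/2) *\<^sub>R (x + (2 * s) *\<^sub>R d2) \<in> F"
      using s e1 e2 by (intro convexD[OF F]) auto
    moreover have "(1/2) *\<^sub>R (x + (2 * s) *\<^sub>R d1) + (1/2) *\<^sub>R (x + (2 * s) *\<^sub>R d2) = x + s *\<^sub>R (d1 + d2)"
      by (simp add: algebra_simps flip: scaleR_add_left)
    ultimately show ?thesis by simp
  qed
  moreover have "min e1 e2 / 2 > 0" using e1 e2 by simp
  ultimately show "d1 + d2 \<in> {d. two_sided_dir F x d}" unfolding two_sided_dir_def by blast
next
  fix c :: real and d assume "d \<in> {d. two_sided_dir F x d}"
  then obtain e where e: "e > 0" "\<forall>s. \<bar>s\<bar> \<le> e \<longrightarrow> x + s *\<^sub>R d \<in> F" by (auto simp: two_sided_dir_def)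
  have "x + s *\<^sub>R (c *\<^sub>R d) \<in> F" if "\<bar>s\<bar> \<le> e / (1 + \<bar>c\<bar>)" for s
  proof -
    have "\<bar>s * c\<bar> \<le> e / (1 + \<bar>c\<bar>) * \<bar>c\<bar>"
      unfolding abs_mult using that by (rule mult_right_mono) simp
    also have "\<dots> \<le> e / (1 + \<bar>c\<bar>) * (1 + \<bar>c\<bar>)" using e(1) by (intro mult_left_mono) auto
    also have "\<dots> = e" by simp
    finally have "x + (s * c) *\<^sub>R d \<in> F" using e(2) by blast
    then show ?thesis by simp
  qed
  moreover have "e / (1 + \<bar>c\<bar>) > 0" using e(1) by (simp add: add_pos_nonneg)
  ultimately show "c *\<^sub>R d \<in> {d. two_sided_dir F x d}" unfolding two_sided_dir_def by blast
qed

lemma two_sided_dir_minface_diff: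
  fixes C :: "'a::real_vector set"
  assumes C: "convex C" and x: "x \<in> C" and y: "y \<in> minface x C"
  shows "two_sided_dir (minface x C) x (y - x)"
proof -
  obtain e where e: "e > 0" "x + e *\<^sub>R (x - y) \<in> minface x C"
    using minface_extensible_through[OF C x y] by blast
  have "x + 1 *\<^sub>R (y - x) \<in> minface x C" using y by simp
  then have fwd: "x + s *\<^sub>R (y - x) \<in> minface x C" if "0 \<le> s" "s \<le> 1" for s
    using convex_shrink_ray[OF convex_minface mem_minface] that by blast
  have bwd: "x + s *\<^sub>R (y - x) \<in> minface x C" if "0 \<le> -s" "-s \<le> e" for s
    using convex_shrink_ray[OF convex_minface mem_minface e(2), of "-s"] that
    by (simp add: algebra_simps)
  have "x + s *\<^sub>R (y - x) \<in> minface x C" if "\<bar>s\<bar> \<le> min e 1" for s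
    using fwd bwd that by (cases "s \<ge> 0") auto
  then show ?thesis unfolding two_sided_dir_def using e by (intro exI[of _ "min e 1"]) auto
qed

lemma two_sided_dir_direction_minface:
  fixes C :: "'a::real_vector set"
  assumes C: "convex C" and x: "x \<in> C" and d: "d \<in> direction (minface x C)"
  shows "two_sided_dir (minface x C) x d"
proof -
  let ?F = "minface x C"
  let ?D = "span ((\<lambda>y. -x + y) ` (?F - {x}))"
  have D: "?D \<subseteq> {d. two_sided_dir ?F x d}"
    using two_sided_dir_minface_diff[OF C x]
    by (intro span_minimal subspace_two_sided_dir[OF convex_minface mem_minface]) auto
  obtain a b where "d = a - b" "a \<in> affine hull ?F" "b \<in> affine hull ?F"
    using d unfolding direction_def by blast
  then obtain v1 v2 where "d = v1 - v2" "v1 \<in> ?D" "v2 \<in> ?D"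
    unfolding affine_hull_span2[OF mem_minface] by auto
  then show ?thesis using D span_diff by blast
qed

lemma subspace_direction:
  assumes "S \<noteq> {}"
  shows "subspace (direction S)"
proof -
  obtain a where "a \<in> S" using assms by blast
  then have a: "a \<in> affine hull S" by (rule hull_inc)
  have "direction S = (\<lambda>y. y - a) ` (affine hull S)"
  proof (intro equalityI subsetI)
    fix d assume "d \<in> direction S"
    then obtain y b where d: "d = y - b" and y: "y \<in> affine hull S" and b: "b \<in> affine hull S"
      unfolding direction_def by blast
    have "a + 1 *\<^sub>R (y - b) \<in> affine hull S"
      by (rule mem_affine_3_minus[OF affine_affine_hull a y b])
    then show "d \<in> (\<lambda>y. y - a) ` (affine hull S)"
      using d by (intro image_eqI[of _ _ "a + (y - b)"]) simp_all
  next
    fix d assume "d \<in> (\<lambda>y. y - a) ` (affine hull S)"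
    then show "d \<in> direction S" using a unfolding direction_def by blast
  qed
  then show ?thesis using affine_diffs_subspace_subtract[OF affine_affine_hull a] by simp
qed

lemma snd_direction_horizontal:
  assumes "horizontal F r" "d \<in> direction F"
  shows "snd d = 0"
proof -
  obtain a b where "d = a - b" "a \<in> affine hull F" "b \<in> affine hull F"
    using assms(2) unfolding direction_def by blast
  then show ?thesis using assms(1) unfolding horizontal_def by auto
qed

lemma scaleR_mem_subspace_iff:
  assumes S: "subspace S" and b: "b \<notin> S"
  shows "c *\<^sub>R b \<in> S \<longleftrightarrow> c = 0"
proof
  assume "c *\<^sub>R b \<in> S"
  then have "(1 / c) *\<^sub>R (c *\<^sub>R b) \<in> S" by (rule subspace_mul[OF S])
  then show "c = 0" using b by (cases "c = 0") auto
qed (simp add: subspace_0[OF S])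

lemma codim_ge_1I:
  assumes S: "subspace S" and b: "b \<notin> S"
  shows "codim_ge 1 S"
  unfolding codim_ge_def
proof (intro exI[of _ "{b}"] conjI)
  have "b \<noteq> 0" using b subspace_0[OF S] by blast
  then show "finite {b}" "card {b} = 1" "independent {b}" by (simp_all add: independent_insert)
  show "span {b} \<inter> S = {0}"
  proof (intro equalityI subsetI)
    fix v assume "v \<in> span {b} \<inter> S"
    then obtain c where "v = c *\<^sub>R b" "c *\<^sub>R b \<in> S" by (auto simp: span_singleton)
    then show "v \<in> {0}" using scaleR_mem_subspace_iff[OF S b] by simp
  qed (use subspace_0[OF S] span_zero in auto)
qed

lemma codim_ge_2I:
  assumes S: "subspace S" and b: "b \<notin> S" and a: "a \<notin> span (insert b S)"
  shows "codim_ge 2 S"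
  unfolding codim_ge_def
proof (intro exI[of _ "{a, b}"] conjI)
  have "b \<noteq> 0" using b subspace_0[OF S] by blast
  moreover have "a \<notin> span {b}" using a span_mono[of "{b}" "insert b S"] by blast
  moreover then have "a \<noteq> b" using span_base[of b "{b}"] by blast
  ultimately show "finite {a, b}" "card {a, b} = 2" "independent {a, b}"
    by (simp_all add: independent_insert)
  show "span {a, b} \<inter> S = {0}"
  proof (intro equalityI subsetI)
    fix v assume v: "v \<in> span {a, b} \<inter> S"
    then obtain k where "v - k *\<^sub>R a \<in> span {b}" unfolding span_insert by blast
    then obtain j where "v - k *\<^sub>R a = j *\<^sub>R b" unfolding span_singleton by blast
    then have v_eq: "v = k *\<^sub>R a + j *\<^sub>R b" by (simp add: algebra_simps)
    have "k = 0"
    proof (rule ccontr)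
      assume "k \<noteq> 0"
      then have "a = (1 / k) *\<^sub>R v - (j / k) *\<^sub>R b" by (simp add: v_eq algebra_simps)
      also have "\<dots> \<in> span (insert b S)" using v by (intro span_diff span_mul span_base) auto
      finally show False using a by blast
    qed
    then show "v \<in> {0}" using v v_eq scaleR_mem_subspace_iff[OF S b] by auto
  qed (use subspace_0[OF S] span_zero in auto)
qed

lemma two_sided_dir_mono:
  assumes "F \<subseteq> G" "two_sided_dir F x d"
  shows "two_sided_dir G x d"
  using assms unfolding two_sided_dir_def by blast

text \<open>For the epigraph of R and the hypograph of M - f \<circ> \<Phi> this is exactly the
  minimality of M.\<close>
definition lies_above :: "('v \<times> real) set \<Rightarrow> ('v \<times> real) set \<Rightarrow> bool" where
  "lies_above A B \<longleftrightarrow> (\<forall>v r r'. (v, r) \<in> A \<longrightarrow> (v, r') \<in> B \<longrightarrow> r' \<le> r)"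

lemma lies_aboveD:
  assumes "lies_above A B" "P \<in> A" "Q \<in> B" "fst P = fst Q"
  shows "snd Q \<le> snd P"
  using assms unfolding lies_above_def by (metis prod.collapse)

lemma vertical_notin_set_sum_direction_minface:
  fixes A B :: "('v::real_vector \<times> real) set"
  assumes A: "convex A" and B: "convex B" and above: "lies_above A B"
    and XA: "X \<in> A" and XB: "X \<in> B"
  shows "(0, 1) \<notin> set_sum (direction (minface X A)) (direction (minface X B))"
proof
  assume "(0, 1) \<in> set_sum (direction (minface X A)) (direction (minface X B))"
  then obtain e h where e: "e \<in> direction (minface X A)" and h: "h \<in> direction (minface X B)"
    and eh: "(0, 1) = e + h"
    unfolding set_sum_def by blast
  have "two_sided_dir A X e" "two_sided_dir B X h"
    using two_sided_dir_mono[OF minface_subset[OF A XA] two_sided_dir_direction_minface[OF A XA e]]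
      two_sided_dir_mono[OF minface_subset[OF B XB] two_sided_dir_direction_minface[OF B XB h]] .
  then obtain \<epsilon>A \<epsilon>B where \<epsilon>: "\<epsilon>A > 0" "\<epsilon>B > 0"
    and lineA: "\<forall>s. \<bar>s\<bar> \<le> \<epsilon>A \<longrightarrow> X + s *\<^sub>R e \<in> A"
    and lineB: "\<forall>s. \<bar>s\<bar> \<le> \<epsilon>B \<longrightarrow> X + s *\<^sub>R h \<in> B"
    unfolding two_sided_dir_def by blast
  define \<sigma> where "\<sigma> = min \<epsilon>A \<epsilon>B"
  have "\<sigma> > 0" using \<epsilon> by (simp add: \<sigma>_def)
  have "h = (0, 1) - e" using eh by simp
  then have h: "fst h = - fst e" "snd h = 1 - snd e" by simp_all
  have "X - \<sigma> *\<^sub>R e \<in> A" "X + \<sigma> *\<^sub>R h \<in> B"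
    using lineA[rule_format, of "-\<sigma>"] lineB[rule_format, of \<sigma>] \<epsilon> by (auto simp: \<sigma>_def)
  moreover have "fst (X - \<sigma> *\<^sub>R e) = fst (X + \<sigma> *\<^sub>R h)" by (simp add: h)
  ultimately have "snd (X + \<sigma> *\<^sub>R h) \<le> snd (X - \<sigma> *\<^sub>R e)" by (rule lies_aboveD[OF above])
  moreover have "snd (X + \<sigma> *\<^sub>R h) = snd (X - \<sigma> *\<^sub>R e) + \<sigma>"
    by (simp add: h right_diff_distrib)
  ultimately show False using \<open>\<sigma> > 0\<close> by linarith
qed

text \<open>Mixing (u, r') with the point (p - \<sigma> e, r) of the level line, where \<sigma> = l / (1 - l),
  cancels the e-component of the step.\<close>
lemma convex_step_along_level_line:
  fixes A :: "('v::real_vector \<times> real) set"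
  assumes A: "convex A" and u: "(u, r') \<in> A" and line: "two_sided_dir A (p, r) (e, 0)"
    and "\<epsilon> > 0"
  obtains l where "0 < l" "l \<le> \<epsilon>" "(p + l *\<^sub>R (u - p - e), l * r' + (1 - l) * r) \<in> A"
proof -
  obtain \<delta> where \<delta>: "\<delta> > 0" "\<forall>s. \<bar>s\<bar> \<le> \<delta> \<longrightarrow> (p + s *\<^sub>R e, r) \<in> A"
    using line unfolding two_sided_dir_def by auto
  define l where "l = min \<epsilon> (min (\<delta> / (1 + \<delta>)) (1/2))"
  have l: "0 < l" "l \<le> \<epsilon>" "l < 1" "l \<le> \<delta> / (1 + \<delta>)"
    using \<delta> \<open>\<epsilon> > 0\<close> by (auto simp: l_def)
  then have "l * (1 + \<delta>) \<le> \<delta>" using \<delta> by (simp add: pos_le_divide_eq)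
  define \<sigma> where "\<sigma> = l / (1 - l)"
  have "0 \<le> \<sigma>" "\<sigma> \<le> \<delta>" using l \<open>l * (1 + \<delta>) \<le> \<delta>\<close> by (auto simp: \<sigma>_def field_simps)
  then have "(p + (-\<sigma>) *\<^sub>R e, r) \<in> A" using \<delta>(2)[rule_format, of "-\<sigma>"] by simp
  then have mem: "l *\<^sub>R (u, r') + (1 - l) *\<^sub>R (p + (-\<sigma>) *\<^sub>R e, r) \<in> A"
    using u l by (intro convexD[OF A]) auto
  have "(1 - l) *\<^sub>R (p + (-\<sigma>) *\<^sub>R e) = (1 - l) *\<^sub>R p - ((1 - l) * \<sigma>) *\<^sub>R e"
    by (simp add: algebra_simps)
  also have "\<dots> = (1 - l) *\<^sub>R p - l *\<^sub>R e" using l by (simp add: \<sigma>_def)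
  finally have "l *\<^sub>R u + (1 - l) *\<^sub>R (p + (-\<sigma>) *\<^sub>R e) = p + l *\<^sub>R (u - p - e)"
    by (simp add: algebra_simps)
  then show ?thesis using that l mem by auto
qed

lemma two_sided_level_dir_minface:
  fixes A :: "('v::real_vector \<times> real) set"
  assumes A: "convex A" and X: "(p, r) \<in> A" and hor: "horizontal (minface (p, r) A) r"
    and d: "d \<in> direction (minface (p, r) A)"
  shows "d = (fst d, 0)" "two_sided_dir A (p, r) (fst d, 0)"
proof -
  show d0: "d = (fst d, 0)" using snd_direction_horizontal[OF hor d] by (simp add: prod_eq_iff)
  show "two_sided_dir A (p, r) (fst d, 0)"
    using two_sided_dir_mono[OF minface_subset[OF A X] two_sided_dir_direction_minface[OF A X d]]
    by (subst (asm) d0)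
qed

lemma level_notin_set_sum_direction_minface:
  fixes A B :: "('v::real_vector \<times> real) set"
  assumes A: "convex A" and B: "convex B" and above: "lies_above A B"
    and XA: "(p, r) \<in> A" and XB: "(p, r) \<in> B"
    and horA: "horizontal (minface (p, r) A) r" and horB: "horizontal (minface (p, r) B) r"
    and off_level: "(u, r') \<in> A \<and> r' < r \<or> (u, r') \<in> B \<and> r < r'"
  shows "(u - p, 0) \<notin> set_sum (direction (minface (p, r) A)) (direction (minface (p, r) B))"
proof
  assume "(u - p, 0) \<in> set_sum (direction (minface (p, r) A)) (direction (minface (p, r) B))"
  then obtain e h where e: "e \<in> direction (minface (p, r) A)" and h: "h \<in> direction (minface (p, r) B)"
    and eh: "(u - p, 0) = e + h"
    unfolding set_sum_def by blast
  have lineA: "two_sided_dir A (p, r) (fst e, 0)" and lineB: "two_sided_dir B (p, r) (fst h, 0)"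
    using two_sided_level_dir_minface[OF A XA horA e] two_sided_level_dir_minface[OF B XB horB h]
    by auto
  obtain \<epsilon>A \<epsilon>B where \<epsilon>: "\<epsilon>A > 0" "\<epsilon>B > 0"
    and onA: "\<forall>s. \<bar>s\<bar> \<le> \<epsilon>A \<longrightarrow> (p + s *\<^sub>R fst e, r) \<in> A"
    and onB: "\<forall>s. \<bar>s\<bar> \<le> \<epsilon>B \<longrightarrow> (p + s *\<^sub>R fst h, r) \<in> B"
    using lineA lineB unfolding two_sided_dir_def by auto
  have u: "u - p - fst e = fst h" "u - p - fst h = fst e"
    using eh by (auto simp: prod_eq_iff algebra_simps)
  from off_level show False
  proof
    assume below: "(u, r') \<in> A \<and> r' < r"
    obtain l where "0 < l" "l \<le> \<epsilon>B" "(p + l *\<^sub>R fst h, l * r' + (1 - l) * r) \<in> A"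
      using convex_step_along_level_line[OF A conjunct1[OF below] lineA \<epsilon>(2)] unfolding u(1) .
    moreover have "(p + l *\<^sub>R fst h, r) \<in> B" using onB \<open>0 < l\<close> \<open>l \<le> \<epsilon>B\<close> by simp
    ultimately have "r \<le> l * r' + (1 - l) * r" using lies_aboveD[OF above] by force
    then show False using \<open>0 < l\<close> below by (simp add: algebra_simps)
  next
    assume above_level: "(u, r') \<in> B \<and> r < r'"
    obtain l where "0 < l" "l \<le> \<epsilon>A" "(p + l *\<^sub>R fst e, l * r' + (1 - l) * r) \<in> B"
      using convex_step_along_level_line[OF B conjunct1[OF above_level] lineB \<epsilon>(1)] unfolding u(2) .
    moreover have "(p + l *\<^sub>R fst e, r) \<in> A" using onA \<open>0 < l\<close> \<open>l \<le> \<epsilon>A\<close> by simp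
    ultimately have "l * r' + (1 - l) * r \<le> r" using lies_aboveD[OF above] by force
    then show False using \<open>0 < l\<close> above_level by (simp add: algebra_simps)
  qed
qed

lemma subspace_set_sum_direction:
  assumes "E \<noteq> {}" "H \<noteq> {}"
  shows "subspace (set_sum (direction E) (direction H))"
  unfolding set_sum_def using assms by (intro subspace_sums subspace_direction)

lemma set_sum_direction_horizontal:
  assumes "horizontal E r" "horizontal H r"
  shows "set_sum (direction E) (direction H) \<subseteq> {z. snd z = 0}"
proof
  fix z assume "z \<in> set_sum (direction E) (direction H)"
  then obtain e h where "z = e + h" "e \<in> direction E" "h \<in> direction H"
    unfolding set_sum_def by blast
  then show "z \<in> {z. snd z = 0}"
    using snd_direction_horizontal[OF assms(1)] snd_direction_horizontal[OF assms(2)] by simp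
qed

lemma codim_ge_2_of_level:
  fixes S :: "('v::real_vector \<times> real) set"
  assumes S: "subspace S" and level: "S \<subseteq> {z. snd z = 0}" and w: "(w, 0) \<notin> S"
  shows "codim_ge 2 S"
proof (rule codim_ge_2I[OF S w])
  have "subspace {z :: 'v \<times> real. snd z = 0}" by (auto simp: subspace_def)
  then have "span (insert (w, 0) S) \<subseteq> {z. snd z = 0}" using level by (intro span_minimal) auto
  then show "(0, 1) \<notin> span (insert (w, 0) S)" by auto
qed

lemma ereal_add_eq_ereal:
  assumes "ereal M = a + b" "a \<noteq> -\<infinity>" "b \<noteq> -\<infinity>"
  shows "a = ereal (real_of_ereal a)" "b = ereal (M - real_of_ereal a)"
  using assms by (cases a; cases b; simp)+

lemma hypo_const_minus_iff:
  "z \<in> hypo (\<lambda>u. ereal M - h u) \<longleftrightarrow> h (fst z) \<le> ereal (M - snd z)"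
  by (cases "h (fst z)") (auto simp: hypo_def split: prod.splits)

lemma convex_hypo_const_minus_linear:
  fixes f :: "'w::real_vector \<Rightarrow> ereal" and \<Phi> :: "'v::real_vector \<Rightarrow> 'w"
  assumes f: "ext_convex f" and \<Phi>: "linear \<Phi>"
  shows "convex (hypo (\<lambda>u. ereal M - f (\<Phi> u)))"
proof (rule convexI)
  fix a b :: "'v \<times> real" and s t :: real
  assume "a \<in> hypo (\<lambda>u. ereal M - f (\<Phi> u))" "b \<in> hypo (\<lambda>u. ereal M - f (\<Phi> u))"
    and st: "0 \<le> s" "0 \<le> t" "s + t = 1"
  then have "s *\<^sub>R (\<Phi> (fst a), M - snd a) + t *\<^sub>R (\<Phi> (fst b), M - snd b) \<in> {(y, r). f y \<le> ereal r}"
    using f unfolding ext_convex_def by (intro convexD) (auto simp: hypo_const_minus_iff)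
  moreover have "s *\<^sub>R (\<Phi> (fst a), M - snd a) + t *\<^sub>R (\<Phi> (fst b), M - snd b)
      = (\<Phi> (fst (s *\<^sub>R a + t *\<^sub>R b)), M - snd (s *\<^sub>R a + t *\<^sub>R b))"
    using st(3) linear_add[OF \<Phi>] linear_scale[OF \<Phi>]
    by (simp add: algebra_simps flip: distrib_left)
  ultimately show "s *\<^sub>R a + t *\<^sub>R b \<in> hypo (\<lambda>u. ereal M - f (\<Phi> u))"
    by (simp add: hypo_const_minus_iff)
qed

lemma lies_above_epi_hypo:
  assumes "\<And>u. ereal M \<le> R u + h u"
  shows "lies_above (epi R) (hypo (\<lambda>u. ereal M - h u))"
  unfolding lies_above_def
proof (intro allI impI)
  fix v r r' assume "(v, r) \<in> epi R" "(v, r') \<in> hypo (\<lambda>u. ereal M - h u)"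
  then have "R v + h v \<le> ereal r + ereal (M - r')"
    by (intro add_mono) (auto simp: epi_def hypo_const_minus_iff)
  then have "R v + h v \<le> ereal (r + (M - r'))" by simp
  with assms[of v] have "ereal M \<le> ereal (r + (M - r'))" by (rule order_trans)
  then show "r' \<le> r" by simp
qed

lemma off_level_point_exists:
  assumes R: "R p = ereal r" and h: "h p = ereal (M - r)"
    and "(INF u. R u) < R p \<or> (INF u. h u) < h p"
  obtains u r' where "(u, r') \<in> epi R \<and> r' < r \<or> (u, r') \<in> hypo (\<lambda>u. ereal M - h u) \<and> r < r'"
  using assms(3)
proof
  assume "(INF u. R u) < R p"
  then obtain u where "R u < ereal r" by (auto simp: INF_less_iff R)
  from ereal_dense2[OF this] obtain r' where "R u < ereal r'" "ereal r' < ereal r" by blast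
  then have "(u, r') \<in> epi R" "r' < r" by (auto simp: epi_def)
  then show ?thesis using that by blast
next
  assume "(INF u. h u) < h p"
  then obtain u where "h u < ereal (M - r)" by (auto simp: INF_less_iff h)
  from ereal_dense2[OF this] obtain z where "h u < ereal z" "ereal z < ereal (M - r)" by blast
  then have "(u, M - z) \<in> hypo (\<lambda>u. ereal M - h u)" "r < M - z"
    by (auto simp: hypo_const_minus_iff)
  then show ?thesis using that by blast
qed

theorem mainTheorem4:
  fixes R :: "'v::real_vector \<Rightarrow> ereal"
    and f :: "real^'m \<Rightarrow> ereal"
    and \<Phi> :: "'v \<Rightarrow> real^'m"
    and p :: 'v and M :: real
  assumes R_val: "\<forall>u. R u \<noteq> -\<infinity>" and f_val: "\<forall>y. f y \<noteq> -\<infinity>"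
    and R_conv: "ext_convex R" and f_conv: "ext_convex f"
    and lin: "linear \<Phi>"
    and minim: "\<forall>u. R p + f (\<Phi> p) \<le> R u + f (\<Phi> u)"
    and M_def: "ereal M = R p + f (\<Phi> p)"
  shows "codim_ge 1 (set_sum (direction (minface (p, real_of_ereal (R p)) (epi R)))
                             (direction (minface (p, real_of_ereal (R p)) (hypo (\<lambda>u. ereal M - f (\<Phi> u))))))
    \<and> ((horizontal (minface (p, real_of_ereal (R p)) (epi R)) (real_of_ereal (R p))
         \<and> horizontal (minface (p, real_of_ereal (R p)) (hypo (\<lambda>u. ereal M - f (\<Phi> u)))) (real_of_ereal (R p))
         \<and> (R p > (INF u. R u) \<or> f (\<Phi> p) > (INF u. f (\<Phi> u))))
       \<longrightarrow> codim_ge 2 (set_sum (direction (minface (p, real_of_ereal (R p)) (epi R)))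
                             (direction (minface (p, real_of_ereal (R p)) (hypo (\<lambda>u. ereal M - f (\<Phi> u)))))))"
proof -
  let ?g = "\<lambda>u. ereal M - f (\<Phi> u)"
  define rp where "rp = real_of_ereal (R p)"
  have Rp: "R p = ereal rp" and fp: "f (\<Phi> p) = ereal (M - rp)"
    using ereal_add_eq_ereal[OF M_def] R_val f_val unfolding rp_def by auto
  let ?FE = "minface (p, rp) (epi R)" and ?FH = "minface (p, rp) (hypo ?g)"
  let ?S = "set_sum (direction ?FE) (direction ?FH)"
  have A: "convex (epi R)" using R_conv unfolding ext_convex_def epi_def .
  have B: "convex (hypo ?g)" using f_conv lin by (rule convex_hypo_const_minus_linear)
  have above: "lies_above (epi R) (hypo ?g)"
    using minim M_def by (intro lies_above_epi_hypo) simp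
  have XA: "(p, rp) \<in> epi R" and XB: "(p, rp) \<in> hypo ?g"
    using Rp fp by (auto simp: epi_def hypo_const_minus_iff)
  have S: "subspace ?S" using mem_minface by (intro subspace_set_sum_direction) auto
  have "codim_ge 1 ?S"
    using codim_ge_1I[OF S vertical_notin_set_sum_direction_minface[OF A B above XA XB]] .
  moreover have "codim_ge 2 ?S"
    if hor: "horizontal ?FE rp" "horizontal ?FH rp"
      and not_min: "R p > (INF u. R u) \<or> f (\<Phi> p) > (INF u. f (\<Phi> u))"
  proof -
    obtain u r' where "(u, r') \<in> epi R \<and> r' < rp \<or> (u, r') \<in> hypo ?g \<and> rp < r'"
      using off_level_point_exists[of R p rp "\<lambda>u. f (\<Phi> u)" M] Rp fp not_min by blast
    then have "(u - p, 0) \<notin> ?S"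
      by (rule level_notin_set_sum_direction_minface[OF A B above XA XB hor])
    then show ?thesis
      using codim_ge_2_of_level[OF S set_sum_direction_horizontal[OF hor]] by blast
  qed
  ultimately show ?thesis unfolding rp_def by blast
qed

end
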